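(* Let $k\ge 2$, $\ell\ge1$, $m\ge1$ be integers with $m\cdot2^{-k\ell}<\frac12$, and let $\mathcal X=\{\Phi_i:0\le i<2^m\}$ be the set of hard CNF formulas described in the context. For all $0\le i,j<2^m$, $$d_{\mathrm{TV}}(\mu_i,\mu_j)\ge d_b(i,j)\cdot2^{-k\ell-2}.$$
   Context: Gadgets: on variables $U=\{v_{i,j}:i\in[\ell],j\in[k]\}$, for each $i\in\{1,\dots,\ell-1\}$, $j\in[k]$, let $c_{ij}$ be the clause on $\{v_{i,r}:r\ne j\}\cup\{v_{i+1,j}\}$ forbidding the all-True assignment if $i$ is odd and the all-False assignment if $i$ is even; let $\mathcal C$ be the set of these clauses and $c$ the clause on $\{v_{1,j}:j\in[k]\}$ forbidding all-True. The unrestricted depth-$\ell$ gadget is $(U,\mathcal C)$, the restricted one is $(U,\mathcal C\cup\{c\})$. Hard formulas: let $V$ have $mk\ell$ variables partitioned into $U_1,\dots,U_m$ each of size $k\ell$. For $0\le i<2^m$, write $i$ in binary with $m$ bits $i_1,\dots,i_m$; $\Phi_i=(V,\mathcal C_i)$ places on each $U_j$ the unrestricted depth-$\ell$ gadget if $i_j=0$ and the restricted depth-$\ell$ gadget if $i_j=1$. $\mu_i$ is the uniform distribution over satisfying assignments of $\Phi_i$, $d_{\mathrm{TV}}$ is total variation distance, and $d_b(i,j)$ is the number of positions where the $m$-bit binary representations of $i$ and $j$ differ. *)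

theory Defs
  imports "HOL-Probability.Probability"
begin

text \<open>Variables: triples (u, i, j) meaning v_{i,j} of block U_u, with
  u \<in> {1..m}, i \<in> {1..l}, j \<in> {1..k}.
  A clause is a pair (S, b): the set S of its variables and the forbidden
  constant value b (it forbids the assignment giving every variable in S the value b).\<close>

type_synonym var = "nat \<times> nat \<times> nat"
type_synonym clause = "var set \<times> bool"

definition vars :: "nat \<Rightarrow> nat \<Rightarrow> nat \<Rightarrow> var set" where
  "vars k l m = {1..m} \<times> {1..l} \<times> {1..k}"

definition assignments :: "var set \<Rightarrow> (var \<Rightarrow> bool) set" where
  "assignments V = {\<sigma>. \<forall>x. x \<notin> V \<longrightarrow> \<sigma> x = False}"

definition clause_sat :: "(var \<Rightarrow> bool) \<Rightarrow> clause \<Rightarrow> bool" where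
  "clause_sat \<sigma> c = (\<not> (\<forall>x\<in>fst c. \<sigma> x = snd c))"

definition satisfying :: "var set \<Rightarrow> clause set \<Rightarrow> (var \<Rightarrow> bool) set" where
  "satisfying V C = {\<sigma> \<in> assignments V. \<forall>c\<in>C. clause_sat \<sigma> c}"

definition gadget_clauses :: "nat \<Rightarrow> nat \<Rightarrow> nat \<Rightarrow> clause set" where
  "gadget_clauses k l u =
     {(({(u, i, r) | r. r \<in> {1..k} \<and> r \<noteq> j} \<union> {(u, Suc i, j)}), odd i) | i j.
        i \<in> {1..l - 1} \<and> j \<in> {1..k}}"

definition restr_clause :: "nat \<Rightarrow> nat \<Rightarrow> clause" where
  "restr_clause k u = ({(u, 1, j) | j. j \<in> {1..k}}, True)"

text \<open>j-th bit (j = 1..m, most significant first) of the m-bit binary representation of i.\<close>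
definition bbit :: "nat \<Rightarrow> nat \<Rightarrow> nat \<Rightarrow> nat" where
  "bbit m i j = (i div 2 ^ (m - j)) mod 2"

definition hard_clauses :: "nat \<Rightarrow> nat \<Rightarrow> nat \<Rightarrow> nat \<Rightarrow> clause set" where
  "hard_clauses k l m i =
     (\<Union>u\<in>{1..m}. gadget_clauses k l u \<union> (if bbit m i u = 1 then {restr_clause k u} else {}))"

definition mu :: "nat \<Rightarrow> nat \<Rightarrow> nat \<Rightarrow> nat \<Rightarrow> (var \<Rightarrow> bool) pmf" where
  "mu k l m i = pmf_of_set (satisfying (vars k l m) (hard_clauses k l m i))"

definition d_TV :: "'a pmf \<Rightarrow> 'a pmf \<Rightarrow> real" where
  "d_TV p q = (\<Sum>x\<in>set_pmf p \<union> set_pmf q. \<bar>pmf p x - pmf q x\<bar>) / 2"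

definition d_b :: "nat \<Rightarrow> nat \<Rightarrow> nat \<Rightarrow> nat" where
  "d_b m i j = card {p \<in> {1..m}. bbit m i p \<noteq> bbit m j p}"

end

theory Submission
  imports Defs
begin

(* Let R_u be the event that the first row of block u is all True. It is impossible under mu_j
   when bit u of j is 1. When bit u of i is 0, any model of Phi_i may be overwritten on block u by
   the alternating assignment (odd rows True, even rows False), which satisfies the unrestricted
   gadget and lies in R_u. At most 2^(kl) models share an overwrite, and the overwrite does not
   touch the events R_v of the other blocks; so if a blocks have bits (0, 1) in (i, j), the models
   of Phi_i avoiding all their events R_u form a fraction at most (1 - 2^(-kl))^a, which is at most
   1 - a 2^(-kl-1) because a 2^(-kl) <= 1. Hence these events separate mu_i from mu_j by
   a 2^(-kl-1), and averaging the two directions gives d_b(i, j) 2^(-kl-2). *)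

definition block :: "nat \<Rightarrow> nat \<Rightarrow> nat \<Rightarrow> var set" where
  "block k l u = {u} \<times> {1..l} \<times> {1..k}"

definition top_row_true :: "nat \<Rightarrow> nat \<Rightarrow> (var \<Rightarrow> bool) set" where
  "top_row_true k u = {\<sigma>. \<forall>r\<in>{1..k}. \<sigma> (u, 1, r)}"

definition hard_models :: "nat \<Rightarrow> nat \<Rightarrow> nat \<Rightarrow> nat \<Rightarrow> (var \<Rightarrow> bool) set" where
  "hard_models k l m i = satisfying (vars k l m) (hard_clauses k l m i)"

definition zero_one_positions :: "nat \<Rightarrow> nat \<Rightarrow> nat \<Rightarrow> nat set" where
  "zero_one_positions m i j = {u \<in> {1..m}. bbit m i u \<noteq> 1 \<and> bbit m j u = 1}"

definition reset_block :: "nat \<Rightarrow> nat \<Rightarrow> nat \<Rightarrow> (var \<Rightarrow> bool) \<Rightarrow> var \<Rightarrow> bool" where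
  "reset_block k l u \<sigma> = (\<lambda>x. if x \<in> block k l u then odd (fst (snd x)) else \<sigma> x)"

lemma finite_assignments: "finite V \<Longrightarrow> finite (assignments V)"
proof -
  assume "finite V"
  moreover have "assignments V \<subseteq> (\<lambda>S x. x \<in> S) ` Pow V"
  proof
    fix \<sigma> assume "\<sigma> \<in> assignments V"
    then have "{x. \<sigma> x} \<in> Pow V" unfolding assignments_def by auto
    then show "\<sigma> \<in> (\<lambda>S x. x \<in> S) ` Pow V" by (rule rev_image_eqI) simp
  qed
  ultimately show ?thesis by (meson finite_Pow_iff finite_imageI finite_subset)
qed

lemma card_le_card_mult_pow_if_agree_outside:
  fixes X Y :: "('a \<Rightarrow> bool) set"
  assumes "finite Y" "finite B"
    and into: "\<And>\<sigma>. \<sigma> \<in> X \<Longrightarrow> g \<sigma> \<in> Y"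
    and agree: "\<And>\<sigma> x. \<sigma> \<in> X \<Longrightarrow> x \<notin> B \<Longrightarrow> g \<sigma> x = \<sigma> x"
  shows "card X \<le> card Y * 2 ^ card B"
proof -
  define f where "f \<sigma> = (g \<sigma>, {x \<in> B. \<sigma> x})" for \<sigma>
  have "inj_on f X"
  proof (rule inj_onI)
    fix \<sigma> \<sigma>' assume "\<sigma> \<in> X" "\<sigma>' \<in> X" "f \<sigma> = f \<sigma>'"
    then have "g \<sigma> = g \<sigma>'" "{x \<in> B. \<sigma> x} = {x \<in> B. \<sigma>' x}" unfolding f_def by simp_all
    show "\<sigma> = \<sigma>'"
    proof
      fix x
      show "\<sigma> x = \<sigma>' x"
      proof (cases "x \<in> B")
        case True
        then show ?thesis using \<open>{x \<in> B. \<sigma> x} = {x \<in> B. \<sigma>' x}\<close> by blast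
      next
        case False
        then show ?thesis using agree \<open>\<sigma> \<in> X\<close> \<open>\<sigma>' \<in> X\<close> \<open>g \<sigma> = g \<sigma>'\<close> by metis
      qed
    qed
  qed
  moreover have "f ` X \<subseteq> Y \<times> Pow B" using into unfolding f_def by auto
  ultimately have "card X \<le> card (Y \<times> Pow B)"
    using assms(1,2) by (metis card_image card_mono finite_Pow_iff finite_SigmaI)
  then show ?thesis using assms(2) by (simp add: card_cartesian_product card_Pow)
qed

lemma card_Diff_le_if_card_le_mult_pow:
  assumes "finite X" "card X \<le> card (X \<inter> R) * 2 ^ n"
  shows "real (card (X - R)) \<le> real (card X) * (1 - (1/2) ^ n)"
proof -
  have "real (card X) \<le> real (card (X \<inter> R)) * 2 ^ n"
    using of_nat_mono[OF assms(2)] by simp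
  then have "real (card X) * (1/2) ^ n \<le> real (card (X \<inter> R))"
    by (simp add: field_simps)
  moreover have "card X = card (X \<inter> R) + card (X - R)"
    using assms(1) by (rule card_Int_Diff)
  ultimately show ?thesis by (simp add: algebra_simps flip: of_nat_add)
qed

lemma finite_hard_models: "finite (hard_models k l m i)"
proof -
  have "finite (vars k l m)" unfolding vars_def by simp
  then show ?thesis
    unfolding hard_models_def satisfying_def by (auto dest: finite_assignments)
qed

lemma hard_clauses_cases:
  assumes "c \<in> hard_clauses k l m i"
  obtains w i' j where "w \<in> {1..m}" "i' \<in> {1..l - 1}" "j \<in> {1..k}"
      "c = ({(w, i', r) | r. r \<in> {1..k} \<and> r \<noteq> j} \<union> {(w, Suc i', j)}, odd i')"
  | w where "w \<in> {1..m}" "bbit m i w = 1" "c = restr_clause k w"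
proof -
  from assms obtain w where "w \<in> {1..m}"
    "c \<in> gadget_clauses k l w \<or> (bbit m i w = 1 \<and> c = restr_clause k w)"
    unfolding hard_clauses_def by (auto split: if_splits)
  then show thesis unfolding gadget_clauses_def using that by blast
qed

lemma hard_models_nonempty:
  assumes "k \<ge> 2"
  shows "hard_models k l m i \<noteq> {}"
proof -
  define \<rho> where "\<rho> x = (x \<in> vars k l m \<and> even (fst (snd x)))" for x :: var
  have "clause_sat \<rho> c" if "c \<in> hard_clauses k l m i" for c
    using that
  proof (cases rule: hard_clauses_cases)
    case (1 w i' j)
    define r where "r = (if j = 1 then 2 else 1 :: nat)"
    have "r \<in> {1..k}" "r \<noteq> j" using assms unfolding r_def by auto
    have "(w, i', r) \<in> vars k l m" using 1(1,2) \<open>r \<in> {1..k}\<close> unfolding vars_def by auto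
    then have "\<rho> (w, i', r) \<noteq> snd c" using 1(4) unfolding \<rho>_def by simp
    moreover have "(w, i', r) \<in> fst c" using 1(4) \<open>r \<in> {1..k}\<close> \<open>r \<noteq> j\<close> by auto
    ultimately show ?thesis unfolding clause_sat_def by blast
  next
    case 2
    then show ?thesis using assms unfolding clause_sat_def restr_clause_def \<rho>_def by force
  qed
  moreover have "\<rho> \<in> assignments (vars k l m)" unfolding assignments_def \<rho>_def by simp
  ultimately show ?thesis unfolding hard_models_def satisfying_def by blast
qed

lemma not_top_row_true_if_restricted:
  assumes "u \<in> {1..m}" "bbit m j u = 1" "\<sigma> \<in> hard_models k l m j"
  shows "\<sigma> \<notin> top_row_true k u"
proof -
  have "restr_clause k u \<in> hard_clauses k l m j"
    using assms(1,2) unfolding hard_clauses_def by auto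
  then have "clause_sat \<sigma> (restr_clause k u)"
    using assms(3) unfolding hard_models_def satisfying_def by blast
  then show ?thesis unfolding clause_sat_def restr_clause_def top_row_true_def by auto
qed

lemma reset_block_top_row_true: "l \<ge> 1 \<Longrightarrow> reset_block k l u \<sigma> \<in> top_row_true k u"
  unfolding reset_block_def top_row_true_def block_def by auto

lemma reset_block_outside: "x \<notin> block k l u \<Longrightarrow> reset_block k l u \<sigma> x = \<sigma> x"
  unfolding reset_block_def by simp

(* Each clause of block u contains a variable of the next row, whose alternating value is the
   opposite of the value forbidden by the clause. *)
lemma reset_block_hard_models:
  assumes "u \<in> {1..m}" "bbit m i u \<noteq> 1" "\<sigma> \<in> hard_models k l m i"
  shows "reset_block k l u \<sigma> \<in> hard_models k l m i"
proof -
  let ?\<sigma>' = "reset_block k l u \<sigma>"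
  have \<sigma>: "\<sigma> \<in> assignments (vars k l m)" "\<And>c. c \<in> hard_clauses k l m i \<Longrightarrow> clause_sat \<sigma> c"
    using assms(3) unfolding hard_models_def satisfying_def by auto
  have "clause_sat ?\<sigma>' c" if c: "c \<in> hard_clauses k l m i" for c
  proof -
    have same_if_off_block: "clause_sat ?\<sigma>' c" if "\<forall>x\<in>fst c. fst x \<noteq> u"
    proof -
      have "?\<sigma>' x = \<sigma> x" if "x \<in> fst c" for x
        using that \<open>\<forall>x\<in>fst c. fst x \<noteq> u\<close> by (auto simp: reset_block_def block_def)
      then show ?thesis using \<sigma>(2)[OF c] unfolding clause_sat_def by auto
    qed
    from c show ?thesis
    proof (cases rule: hard_clauses_cases)
      case (1 w i' j)
      show ?thesis
      proof (cases "w = u")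
        case True
        then have "(u, Suc i', j) \<in> fst c" "?\<sigma>' (u, Suc i', j) \<noteq> snd c"
          using 1 unfolding reset_block_def block_def by auto
        then show ?thesis unfolding clause_sat_def by blast
      qed (use 1 same_if_off_block in auto)
    next
      case 2
      then show ?thesis
        using assms(2) same_if_off_block unfolding restr_clause_def by auto
    qed
  qed
  moreover have "?\<sigma>' \<in> assignments (vars k l m)"
    using \<sigma>(1) assms(1) unfolding assignments_def reset_block_def block_def vars_def by auto
  ultimately show ?thesis unfolding hard_models_def satisfying_def by blast
qed

lemma card_hard_models_avoiding_top_rows:
  assumes "l \<ge> 1" "finite A" "A \<subseteq> {u \<in> {1..m}. bbit m i u \<noteq> 1}"
  shows "real (card (hard_models k l m i - (\<Union>u\<in>A. top_row_true k u)))
           \<le> real (card (hard_models k l m i)) * (1 - (1/2) ^ (k * l)) ^ card A"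
  using assms(2,3)
proof (induction A rule: finite_induct)
  case empty
  show ?case by simp
next
  case (insert u A)
  let ?S = "hard_models k l m i"
  define X where "X = ?S - (\<Union>v\<in>A. top_row_true k v)"
  have u: "u \<in> {1..m}" "bbit m i u \<noteq> 1" using insert.prems by auto
  have finite_X: "finite X" unfolding X_def using finite_hard_models by blast
  have "reset_block k l u \<sigma> \<in> X \<inter> top_row_true k u" if "\<sigma> \<in> X" for \<sigma>
  proof -
    have "reset_block k l u \<sigma> \<in> top_row_true k v \<longleftrightarrow> \<sigma> \<in> top_row_true k v" if "v \<in> A" for v
      using insert.hyps(2) that unfolding top_row_true_def reset_block_def block_def by auto
    then show ?thesis
      using \<open>\<sigma> \<in> X\<close> reset_block_hard_models[OF u] reset_block_top_row_true[OF assms(1)]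
      unfolding X_def by auto
  qed
  then have "card X \<le> card (X \<inter> top_row_true k u) * 2 ^ card (block k l u)"
    by (intro card_le_card_mult_pow_if_agree_outside[where g = "reset_block k l u"])
      (use finite_X in \<open>auto simp: block_def reset_block_outside\<close>)
  moreover have "card (block k l u) = k * l" unfolding block_def by (simp add: card_cartesian_product)
  ultimately have "real (card (X - top_row_true k u)) \<le> real (card X) * (1 - (1/2) ^ (k * l))"
    using finite_X by (intro card_Diff_le_if_card_le_mult_pow) simp_all
  also have "\<dots> \<le> real (card ?S) * (1 - (1/2) ^ (k * l)) ^ card A * (1 - (1/2) ^ (k * l))"
    using insert X_def by (intro mult_right_mono) (auto simp: power_le_one)
  finally show ?case using insert.hyps by (simp add: X_def Diff_eq Int_ac mult_ac)
qed

lemma d_TV_commute: "d_TV p q = d_TV q p"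
  unfolding d_TV_def by (simp add: Un_commute abs_minus_commute)

lemma measure_pmf_diff_le_d_TV:
  fixes p q :: "'a pmf"
  assumes "finite (set_pmf p)" "finite (set_pmf q)"
  shows "measure_pmf.prob p E - measure_pmf.prob q E \<le> d_TV p q"
proof -
  define U where "U = set_pmf p \<union> set_pmf q"
  define d where "d x = pmf p x - pmf q x" for x
  have "finite U" using assms unfolding U_def by simp
  have prob_eq_sum: "measure_pmf.prob r F = sum (pmf r) (U \<inter> F)" if "set_pmf r \<subseteq> U" for r F
    using \<open>finite U\<close> that measure_Int_set_pmf[of r F] measure_Int_set_pmf[of r "U \<inter> F"]
    by (metis Int_absorb2 inf_commute inf_left_commute finite_Int measure_measure_pmf_finite)
  have in_E: "sum d (U \<inter> E) = measure_pmf.prob p E - measure_pmf.prob q E"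
    unfolding d_def sum_subtractf by (simp add: prob_eq_sum U_def)
  have "sum d (U \<inter> E) + sum d (U - E) = sum d U"
    using sum.Int_Diff[OF \<open>finite U\<close>, of d E] by simp
  also have "\<dots> = 0"
    unfolding d_def sum_subtractf using \<open>finite U\<close> by (simp add: sum_pmf_eq_1 U_def)
  finally have "sum d (U \<inter> E) + sum d (U - E) = 0" .
  moreover have "sum d (U \<inter> E) \<le> sum (\<lambda>x. \<bar>d x\<bar>) (U \<inter> E)"
    by (rule sum_mono) simp
  moreover have "- sum d (U - E) \<le> sum (\<lambda>x. \<bar>d x\<bar>) (U - E)"
    unfolding sum_negf[symmetric] by (rule sum_mono) simp
  moreover have "sum (\<lambda>x. \<bar>d x\<bar>) (U \<inter> E) + sum (\<lambda>x. \<bar>d x\<bar>) (U - E) = 2 * d_TV p q"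
    using sum.Int_Diff[OF \<open>finite U\<close>, of "\<lambda>x. \<bar>d x\<bar>" E] unfolding d_TV_def d_def U_def by simp
  ultimately show ?thesis using in_E by linarith
qed

lemma one_minus_pow_lower_bound:
  fixes x :: real
  assumes "0 \<le> x" "x \<le> 1" "a * x \<le> 1"
  shows "a * x / 2 \<le> 1 - (1 - x) ^ a"
proof -
  define y where "y = a * x"
  have "0 \<le> y" "y \<le> 1" using assms unfolding y_def by simp_all
  then have pos: "0 < 1 + y" by simp
  have "(1 - x) ^ a * (1 + a * x) \<le> (1 - x) ^ a * (1 + x) ^ a"
    using assms Bernoulli_inequality[of x a] by (intro mult_left_mono) simp_all
  also have "\<dots> = (1 - x\<^sup>2) ^ a" by (simp flip: power_mult_distrib add: power2_eq_square algebra_simps)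
  also have "\<dots> \<le> 1" using assms by (simp add: power_le_one power2_le_iff_abs_le)
  finally have "(1 - x) ^ a \<le> 1 / (1 + y)" using pos by (simp add: field_simps y_def)
  also have "\<dots> \<le> 1 - y / 2"
  proof -
    have "y * y \<le> y" using \<open>0 \<le> y\<close> \<open>y \<le> 1\<close> by (simp add: mult_left_le)
    then show ?thesis using pos by (simp add: field_simps)
  qed
  finally show ?thesis by (simp add: y_def)
qed

lemma d_TV_mu_ge_one_sided:
  assumes "k \<ge> 2" "l \<ge> 1" "real m * (1/2) ^ (k * l) \<le> 1"
  shows "real (card (zero_one_positions m i j)) * (1/2) ^ (k * l) / 2
           \<le> d_TV (mu k l m i) (mu k l m j)"
proof -
  define A where "A = zero_one_positions m i j"
  define E where "E = (\<Union>u\<in>A. top_row_true k u)"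
  define S where "S = hard_models k l m i"
  define T where "T = hard_models k l m j"
  define x :: real where "x = (1/2) ^ (k * l)"
  have S: "finite S" "S \<noteq> {}" and T: "finite T" "T \<noteq> {}"
    unfolding S_def T_def using finite_hard_models hard_models_nonempty[OF assms(1)] by auto
  have mu_eq: "mu k l m i = pmf_of_set S" "mu k l m j = pmf_of_set T"
    unfolding mu_def S_def T_def hard_models_def by simp_all
  have "T \<inter> E = {}"
    using not_top_row_true_if_restricted unfolding T_def E_def A_def zero_one_positions_def by blast
  then have prob_T: "measure_pmf.prob (mu k l m j) E = 0"
    using T by (simp add: mu_eq measure_pmf_of_set)
  have "real (card (S - E)) \<le> real (card S) * (1 - x) ^ card A"
    unfolding S_def E_def x_def
    by (rule card_hard_models_avoiding_top_rows[OF assms(2)]) (auto simp: A_def zero_one_positions_def)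
  then have "real (card (S - E)) / real (card S) \<le> (1 - x) ^ card A"
    using S by (simp add: pos_divide_le_eq card_gt_0_iff mult.commute)
  moreover have "measure_pmf.prob (mu k l m i) E = 1 - real (card (S - E)) / real (card S)"
  proof -
    have "0 < real (card S)" using S by (simp add: card_gt_0_iff)
    moreover have "real (card (S \<inter> E)) = real (card S) - real (card (S - E))"
      using card_Int_Diff[OF S(1), of E] by simp
    ultimately show ?thesis using S by (simp add: mu_eq measure_pmf_of_set diff_divide_distrib)
  qed
  ultimately have "1 - (1 - x) ^ card A \<le> measure_pmf.prob (mu k l m i) E" by linarith
  moreover have "card A * x / 2 \<le> 1 - (1 - x) ^ card A"
  proof (rule one_minus_pow_lower_bound)
    show "0 \<le> x" "x \<le> 1" unfolding x_def by (simp_all add: power_le_one)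
    have "card A \<le> card {1..m}" unfolding A_def zero_one_positions_def by (rule card_mono) auto
    then have "card A \<le> m" by simp
    then have "real (card A) * x \<le> real m * x" unfolding x_def by (intro mult_right_mono) simp_all
    then show "card A * x \<le> 1" using assms(3) unfolding x_def by linarith
  qed
  moreover have "measure_pmf.prob (mu k l m i) E - measure_pmf.prob (mu k l m j) E
                   \<le> d_TV (mu k l m i) (mu k l m j)"
    using S T by (intro measure_pmf_diff_le_d_TV) (simp_all add: mu_eq)
  ultimately show ?thesis using prob_T unfolding A_def x_def by linarith
qed

lemma d_b_eq_card_add_card:
  "d_b m i j = card (zero_one_positions m i j) + card (zero_one_positions m j i)"
proof -
  have bit: "bbit m a u = 0 \<or> bbit m a u = 1" for a u unfolding bbit_def by auto
  have "{u \<in> {1..m}. bbit m i u \<noteq> bbit m j u} = zero_one_positions m i j \<union> zero_one_positions m j i"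
    (is "?D = ?A \<union> ?B")
  proof (rule set_eqI)
    fix u
    show "u \<in> ?D \<longleftrightarrow> u \<in> ?A \<union> ?B"
      using bit[of i u] bit[of j u] unfolding zero_one_positions_def by auto
  qed
  moreover have "?A \<inter> ?B = {}" unfolding zero_one_positions_def by auto
  ultimately show ?thesis unfolding d_b_def by (simp add: card_Un_disjoint zero_one_positions_def)
qed

theorem lemma5p7:
  fixes k l m i j :: nat
  assumes "k \<ge> 2" and "l \<ge> 1" and "m \<ge> 1"
    and "real m * (1/2) ^ (k * l) < 1/2"
    and "i < 2 ^ m" and "j < 2 ^ m"
  shows "d_TV (mu k l m i) (mu k l m j) \<ge> real (d_b m i j) * (1/2) ^ (k * l + 2)"
proof -
  let ?x = "(1/2::real) ^ (k * l)"
  have small: "real m * ?x \<le> 1" using assms(4) by simp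
  have "real (card (zero_one_positions m i j)) * ?x / 2 \<le> d_TV (mu k l m i) (mu k l m j)"
    by (rule d_TV_mu_ge_one_sided[OF assms(1,2) small])
  moreover have "real (card (zero_one_positions m j i)) * ?x / 2 \<le> d_TV (mu k l m i) (mu k l m j)"
    unfolding d_TV_commute[of "mu k l m i"] by (rule d_TV_mu_ge_one_sided[OF assms(1,2) small])
  ultimately show ?thesis
    unfolding d_b_eq_card_add_card by (simp add: field_simps)
qed

end
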